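(* Every fragile graph $G$ with $|V(G)|\geq 4$ satisfies $|E(G)|\leq 2.5|V(G)|-5$. Consequently every non-null fragile graph has a vertex of degree at most $4$.
   Context: All graphs are finite and simple. A graph is $k$-connected if it has at least $k+1$ vertices and no vertex cutset with at most $k-1$ vertices. A graph is fragile if it has no $3$-connected subgraph. *)

theory Defs
  imports Complex_Main
begin

definition graph :: "'a set \<Rightarrow> 'a set set \<Rightarrow> bool" where
  "graph V E \<longleftrightarrow> finite V \<and> (\<forall>e\<in>E. \<exists>u v. u \<noteq> v \<and> e = {u, v} \<and> u \<in> V \<and> v \<in> V)"

definition subgraph :: "'a set \<Rightarrow> 'a set set \<Rightarrow> 'a set \<Rightarrow> 'a set set \<Rightarrow> bool" where
  "subgraph W F V E \<longleftrightarrow> W \<subseteq> V \<and> F \<subseteq> E \<and> graph W F"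

definition adj :: "'a set set \<Rightarrow> 'a \<Rightarrow> 'a \<Rightarrow> bool" where
  "adj E u v \<longleftrightarrow> {u, v} \<in> E"

definition connected_graph :: "'a set \<Rightarrow> 'a set set \<Rightarrow> bool" where
  "connected_graph V E \<longleftrightarrow> (\<forall>u\<in>V. \<forall>v\<in>V. (adj E)\<^sup>*\<^sup>* u v)"

definition del_edges :: "'a set \<Rightarrow> 'a set set \<Rightarrow> 'a set set" where
  "del_edges S E = {e \<in> E. e \<inter> S = {}}"

definition k_connected :: "nat \<Rightarrow> 'a set \<Rightarrow> 'a set set \<Rightarrow> bool" where
  "k_connected k V E \<longleftrightarrow> card V \<ge> k + 1 \<and>
     (\<forall>S. S \<subseteq> V \<and> card S \<le> k - 1 \<longrightarrow> connected_graph (V - S) (del_edges S E))"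

definition fragile :: "'a set \<Rightarrow> 'a set set \<Rightarrow> bool" where
  "fragile V E \<longleftrightarrow> \<not> (\<exists>W F. subgraph W F V E \<and> k_connected 3 W F)"

definition degree :: "'a set set \<Rightarrow> 'a \<Rightarrow> nat" where
  "degree E v = card {e \<in> E. v \<in> e}"

end

theory Submission
  imports Defs
begin

text \<open>Induction on the number of vertices, proving 2|E| + 10 \<le> 5|V|. A vertex of degree at
  most 2 can be deleted. Otherwise G, having at least four vertices, is not 3-connected, so a
  cutset S of size at most 2 splits G into two subgraphs G1, G2 with V(G1) \<inter> V(G2) = S
  covering all edges; minimum degree 3 forces each to have at least four vertices, and the
  induction hypothesis gives 2|E| \<le> 5(|V| + |S|) - 20 \<le> 5|V| - 10. The degree bound
  follows by the handshake lemma, or directly when |V| \<le> 3.\<close>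

definition induced :: "'a set set \<Rightarrow> 'a set \<Rightarrow> 'a set set" where
  "induced E W = {e \<in> E. e \<subseteq> W}"

lemma graph_edgeE:
  assumes "graph V E" "e \<in> E"
  obtains u v where "u \<noteq> v" "e = {u, v}" "u \<in> V" "v \<in> V"
  using assms by (auto simp: graph_def)

lemma graph_finite_edges: "graph V E \<Longrightarrow> finite E"
  unfolding graph_def
  by (metis (no_types, lifting) Pow_iff empty_subsetI finite_Pow_iff insert_subset
      rev_finite_subset subsetI)

lemma graph_induced:
  assumes g: "graph V E" and W: "W \<subseteq> V"
  shows "graph W (induced E W)"
  unfolding graph_def
proof (intro conjI ballI)
  show "finite W" using g W by (auto simp: graph_def intro: finite_subset)
next
  fix e assume "e \<in> induced E W"
  then have "e \<in> E" "e \<subseteq> W" by (auto simp: induced_def)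
  then show "\<exists>u v. u \<noteq> v \<and> e = {u, v} \<and> u \<in> W \<and> v \<in> W"
    by (metis g graph_def insert_subset)
qed

lemma subgraph_induced: "graph V E \<Longrightarrow> W \<subseteq> V \<Longrightarrow> subgraph W (induced E W) V E"
  by (simp add: subgraph_def graph_induced) (auto simp: induced_def)

lemma fragile_subgraph: "fragile V E \<Longrightarrow> subgraph W F V E \<Longrightarrow> fragile W F"
  unfolding fragile_def subgraph_def by (meson order_trans)

lemma fragile_induced: "fragile V E \<Longrightarrow> graph V E \<Longrightarrow> W \<subseteq> V \<Longrightarrow> fragile W (induced E W)"
  by (metis fragile_subgraph subgraph_induced)

lemma fragile_not_3_connected: "fragile V E \<Longrightarrow> graph V E \<Longrightarrow> \<not> k_connected 3 V E"
  unfolding fragile_def subgraph_def by blast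

lemma graph_card_edges_le: "graph V E \<Longrightarrow> card E \<le> card V choose 2"
proof -
  assume g: "graph V E"
  then have fin: "finite V" by (simp add: graph_def)
  have "E \<subseteq> {B. B \<subseteq> V \<and> card B = 2}"
    by (auto elim: graph_edgeE[OF g])
  then have "card E \<le> card {B. B \<subseteq> V \<and> card B = 2}"
    using fin by (intro card_mono) auto
  then show ?thesis using n_subsets[OF fin] by simp
qed

lemma graph_degree_le:
  assumes g: "graph V E" and u: "u \<in> V"
  shows "degree E u \<le> card V - 1"
proof -
  have fin: "finite V" using g by (simp add: graph_def)
  have "{e \<in> E. u \<in> e} \<subseteq> (\<lambda>x. {u, x}) ` (V - {u})"
    by (auto elim!: graph_edgeE[OF g] simp: insert_commute)
  then have "degree E u \<le> card ((\<lambda>x. {u, x}) ` (V - {u}))"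
    unfolding degree_def using fin by (intro card_mono) auto
  also have "\<dots> \<le> card (V - {u})" using fin by (intro card_image_le) auto
  finally show ?thesis using u fin by simp
qed

lemma degree_lt_card_of_separated:
  assumes g: "graph V E" and V1: "V1 \<subseteq> V" and u: "u \<in> V1 - V2"
    and cover: "\<And>e. e \<in> E \<Longrightarrow> e \<subseteq> V1 \<or> e \<subseteq> V2"
  shows "degree E u < card V1"
proof -
  have "{e \<in> E. u \<in> e} = {e \<in> induced E V1. u \<in> e}"
    using cover u by (auto simp: induced_def)
  then have "degree E u \<le> card V1 - 1"
    using graph_degree_le[OF graph_induced[OF g V1]] u by (simp add: degree_def)
  moreover have "card V1 > 0"
    using g V1 u by (auto simp: graph_def card_gt_0_iff intro: finite_subset)
  ultimately show ?thesis by linarith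
qed

lemma card_edges_le_sides:
  "finite E \<Longrightarrow> (\<And>e. e \<in> E \<Longrightarrow> e \<subseteq> V1 \<or> e \<subseteq> V2)
    \<Longrightarrow> card E \<le> card (induced E V1) + card (induced E V2)"
  by (rule order_trans[OF card_mono card_Un_le]) (auto simp: induced_def)

lemma card_edges_delete_vertex:
  assumes g: "graph V E"
  shows "card E = card (induced E (V - {v})) + degree E v"
proof -
  have "E = induced E (V - {v}) \<union> {e \<in> E. v \<in> e}"
    "induced E (V - {v}) \<inter> {e \<in> E. v \<in> e} = {}"
    by (auto simp: induced_def elim: graph_edgeE[OF g])
  then show ?thesis
    using graph_finite_edges[OF g] by (metis card_Un_disjoint degree_def finite_Un)
qed

lemma degree_sum: "graph V E \<Longrightarrow> (\<Sum>v\<in>V. degree E v) = 2 * card E"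
proof -
  assume g: "graph V E"
  have fin: "finite V" using g by (simp add: graph_def)
  have "(\<Sum>v\<in>V. degree E v) = (\<Sum>v\<in>V. \<Sum>e\<in>E. if v \<in> e then 1 else 0)"
    using graph_finite_edges[OF g] by (simp add: degree_def sum.If_cases Int_def)
  also have "\<dots> = (\<Sum>e\<in>E. card (V \<inter> e))"
    using fin by (subst sum.swap) (simp add: sum.If_cases)
  also have "\<dots> = (\<Sum>e\<in>E. 2)"
    by (rule sum.cong) (auto elim!: graph_edgeE[OF g] simp: Int_absorb1)
  finally show ?thesis by simp
qed

lemma exists_degree_le_average:
  assumes g: "graph V E" and ne: "V \<noteq> {}" and avg: "2 * card E < Suc d * card V"
  shows "\<exists>v\<in>V. degree E v \<le> d"
proof (rule ccontr)
  assume "\<not> ?thesis"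
  then have "(\<Sum>v\<in>V. Suc d) \<le> (\<Sum>v\<in>V. degree E v)"
    by (intro sum_mono) (simp add: not_le Suc_le_eq)
  then show False using avg degree_sum[OF g] by (simp add: mult.commute)
qed

text \<open>C is the component of u in G - S; the two sides are C \<union> S and V - C.\<close>
lemma separation:
  assumes g: "graph V E" and S: "S \<subseteq> V"
    and nc: "\<not> connected_graph (V - S) (del_edges S E)"
  obtains V1 V2 where "V1 \<union> V2 = V" "V1 \<inter> V2 = S" "V1 - V2 \<noteq> {}" "V2 - V1 \<noteq> {}"
    "\<And>e. e \<in> E \<Longrightarrow> e \<subseteq> V1 \<or> e \<subseteq> V2"
proof -
  let ?R = "(adj (del_edges S E))\<^sup>*\<^sup>*"
  obtain u w where u: "u \<in> V - S" and w: "w \<in> V - S" and nuw: "\<not> ?R u w"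
    using nc unfolding connected_graph_def by blast
  define C where "C = {x \<in> V - S. ?R u x}"
  have cover: "e \<subseteq> C \<union> S \<or> e \<subseteq> V - C" if e: "e \<in> E" for e
  proof (rule ccontr)
    assume "\<not> ?thesis"
    then obtain a b where a: "a \<in> C" and b: "b \<in> V - S - C" and eab: "e = {a, b}"
      using e by (auto elim!: graph_edgeE[OF g] simp: C_def)
    have "adj (del_edges S E) a b"
      using e a b by (auto simp: eab adj_def del_edges_def C_def)
    then have "b \<in> C" using a b by (auto simp: C_def intro: rtranclp.rtrancl_into_rtrancl)
    then show False using b by simp
  qed
  show thesis
  proof
    show "C \<union> S \<union> (V - C) = V" "(C \<union> S) \<inter> (V - C) = S"
      using S by (auto simp: C_def)
    show "C \<union> S - (V - C) \<noteq> {}" "V - C - (C \<union> S) \<noteq> {}"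
      using u w nuw by (auto simp: C_def)
  qed (use cover in blast)
qed

lemma edge_bound_step_low_degree:
  fixes V :: "'a set"
  assumes g: "graph V E" and fr: "fragile V E" and n4: "4 \<le> card V"
    and v: "v \<in> V" and dv: "degree E v \<le> 2"
    and IH: "\<And>(W :: 'a set) F. card W < card V \<Longrightarrow> graph W F \<Longrightarrow> fragile W F \<Longrightarrow> 4 \<le> card W
      \<Longrightarrow> 2 * card F + 10 \<le> 5 * card W"
  shows "2 * card E + 10 \<le> 5 * card V"
proof -
  let ?V' = "V - {v}" and ?E' = "induced E (V - {v})"
  have g': "graph ?V' ?E'" and fr': "fragile ?V' ?E'"
    using graph_induced[OF g] fragile_induced[OF fr g] by auto
  have cV': "card ?V' = card V - 1" using v g by (simp add: graph_def)
  have "2 * card ?E' + 9 \<le> 5 * card ?V'"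
  proof (cases "card V = 4")
    case True
    then show ?thesis using graph_card_edges_le[OF g'] cV' by (simp add: numeral_eq_Suc)
  next
    case False
    then have "4 \<le> card ?V'" using cV' n4 by simp
    then show ?thesis using IH[OF _ g' fr'] cV' n4 by simp
  qed
  then show ?thesis using card_edges_delete_vertex[OF g, of v] dv cV' n4 by simp
qed

lemma edge_bound_step_min_degree_3:
  fixes V :: "'a set"
  assumes g: "graph V E" and fr: "fragile V E" and n4: "4 \<le> card V"
    and deg3: "\<And>v. v \<in> V \<Longrightarrow> 3 \<le> degree E v"
    and IH: "\<And>(W :: 'a set) F. card W < card V \<Longrightarrow> graph W F \<Longrightarrow> fragile W F \<Longrightarrow> 4 \<le> card W
      \<Longrightarrow> 2 * card F + 10 \<le> 5 * card W"
  shows "2 * card E + 10 \<le> 5 * card V"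
proof -
  have fin: "finite V" using g by (simp add: graph_def)
  have "\<not> (\<forall>S. S \<subseteq> V \<and> card S \<le> 2 \<longrightarrow> connected_graph (V - S) (del_edges S E))"
    using fragile_not_3_connected[OF fr g] n4 by (simp add: k_connected_def)
  then obtain S where S: "S \<subseteq> V" "card S \<le> 2"
    and nc: "\<not> connected_graph (V - S) (del_edges S E)" by blast
  obtain V1 V2 where V12: "V1 \<union> V2 = V" "V1 \<inter> V2 = S" "V1 - V2 \<noteq> {}" "V2 - V1 \<noteq> {}"
    and cover: "\<And>e. e \<in> E \<Longrightarrow> e \<subseteq> V1 \<or> e \<subseteq> V2"
    using separation[OF g S(1) nc] by blast
  have side_bound: "2 * card (induced E Vi) + 10 \<le> 5 * card Vi"
    if Vi: "Vi \<union> Vj = V" "Vi - Vj \<noteq> {}" "Vj - Vi \<noteq> {}"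
      and cov: "\<And>e. e \<in> E \<Longrightarrow> e \<subseteq> Vi \<or> e \<subseteq> Vj" for Vi Vj
  proof -
    have sub: "Vi \<subseteq> V" using Vi(1) by blast
    obtain u where u: "u \<in> Vi - Vj" using Vi(2) by blast
    have "4 \<le> card Vi"
      using degree_lt_card_of_separated[OF g sub u cov] deg3 u sub by force
    moreover have "card Vi < card V"
      using fin Vi by (intro psubset_card_mono) auto
    ultimately show ?thesis
      using IH[OF _ graph_induced[OF g sub] fragile_induced[OF fr g sub]] by simp
  qed
  have "card E \<le> card (induced E V1) + card (induced E V2)"
    using card_edges_le_sides[OF graph_finite_edges[OF g] cover] .
  moreover have "card V1 + card V2 = card V + card S"
    using card_Un_Int[of V1 V2] V12(1,2) fin by (metis finite_Un)
  moreover have "2 * card (induced E V1) + 10 \<le> 5 * card V1"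
    using side_bound V12 cover by blast
  moreover have "2 * card (induced E V2) + 10 \<le> 5 * card V2"
    using side_bound[of V2 V1] V12 cover by (metis sup_commute)
  ultimately show ?thesis using S(2) by linarith
qed

lemma fragile_edge_bound:
  assumes "graph V E" "fragile V E" "4 \<le> card V"
  shows "2 * card E + 10 \<le> 5 * card V"
  using assms
proof (induction "card V" arbitrary: V E rule: less_induct)
  case less
  show ?case
  proof (cases "\<exists>v\<in>V. degree E v \<le> 2")
    case True
    then obtain v where "v \<in> V" "degree E v \<le> 2" by blast
    then show ?thesis using edge_bound_step_low_degree[OF less.prems] less.hyps by blast
  next
    case False
    then have "\<And>v. v \<in> V \<Longrightarrow> 3 \<le> degree E v" by force
    then show ?thesis using edge_bound_step_min_degree_3[OF less.prems] less.hyps by blast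
  qed
qed

theorem mainTheorem3:
  fixes V :: "'a set" and E :: "'a set set"
  assumes "graph V E" and "fragile V E"
  shows "(card V \<ge> 4 \<longrightarrow> real (card E) \<le> 2.5 * real (card V) - 5)
       \<and> (V \<noteq> {} \<longrightarrow> (\<exists>v\<in>V. degree E v \<le> 4))"
proof (intro conjI impI)
  assume "card V \<ge> 4"
  then have "real (2 * card E + 10) \<le> real (5 * card V)"
    using fragile_edge_bound[OF assms] by linarith
  then show "real (card E) \<le> 2.5 * real (card V) - 5" by simp
next
  assume ne: "V \<noteq> {}"
  show "\<exists>v\<in>V. degree E v \<le> 4"
  proof (cases "card V \<ge> 4")
    case True
    then show ?thesis
      using exists_degree_le_average[OF assms(1) ne] fragile_edge_bound[OF assms] by simp
  next
    case False
    obtain v where "v \<in> V" using ne by blast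
    then show ?thesis using graph_degree_le[OF assms(1)] False by force
  qed
qed

end
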